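(* Let $n\geq 2$. If $f:\mathbb{R}^n\rightarrow\mathbb{R}^n$ is quasiconformal and $\sup_{z\in S^{n-1}}\widetilde{H}_f(B(z,r))\rightarrow 0$ as $r\rightarrow 0$, then $f(S^{n-1})$ is Reifenberg flat with vanishing constant.
   Context: For $\Omega\subset\mathbb{R}^n$, $H_f(\Omega)=\sup\{|f(x)-f(y)|/|f(x)-f(z)|: x,y,z\in\Omega,\ |x-y|\leq|x-z|\}$ and $\widetilde{H}_f(\Omega)=H_f(\Omega)-1$. For a closed $\Sigma\subset\mathbb{R}^n$, $\theta_\Sigma(x,t)=\frac1t\min_{L}\mathrm{HD}[\Sigma\cap B(x,t),(x+L)\cap B(x,t)]$, minimum over $(n-1)$-dimensional linear subspaces $L$, $\mathrm{HD}$ the Hausdorff distance. $\Sigma$ is $(\delta,R)$-Reifenberg flat if $\theta_\Sigma(x,t)\leq\delta$ for all $x\in\Sigma$, $0<t\leq R$; it is Reifenberg flat with vanishing constant if for every $\delta>0$ there is $R_\delta>0$ such that $\Sigma$ is $(\delta,R_\delta)$-Reifenberg flat. *)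

theory Defs
  imports "HOL-Analysis.Analysis"
begin

text \<open>Three-point distortion H_f(Omega), as an extended real (it may be infinite).
  Triples with x = z are excluded (there the quotient is 0/0; for injective f
  such triples force y = x).\<close>
definition H_dist :: "('a::euclidean_space \<Rightarrow> 'a) \<Rightarrow> 'a set \<Rightarrow> ereal" where
  "H_dist f \<Omega> = (SUP (x,y,z) \<in> {(x,y,z). x \<in> \<Omega> \<and> y \<in> \<Omega> \<and> z \<in> \<Omega> \<and> x \<noteq> z \<and> dist x y \<le> dist x z}.
                     ereal (norm (f x - f y) / norm (f x - f z)))"

definition H_tilde :: "('a::euclidean_space \<Rightarrow> 'a) \<Rightarrow> 'a set \<Rightarrow> ereal" where
  "H_tilde f \<Omega> = H_dist f \<Omega> - 1"

definition L_max :: "('a::euclidean_space \<Rightarrow> 'a) \<Rightarrow> 'a \<Rightarrow> real \<Rightarrow> ereal" where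
  "L_max f x r = (SUP y \<in> sphere x r. ereal (dist (f y) (f x)))"

definition l_min :: "('a::euclidean_space \<Rightarrow> 'a) \<Rightarrow> 'a \<Rightarrow> real \<Rightarrow> ereal" where
  "l_min f x r = (INF y \<in> sphere x r. ereal (dist (f y) (f x)))"

definition quasiconformal :: "('a::euclidean_space \<Rightarrow> 'a) \<Rightarrow> bool" where
  "quasiconformal f \<longleftrightarrow> (\<exists>g. homeomorphism UNIV UNIV f g) \<and>
     (\<exists>H::real. \<forall>x. Limsup (at_right 0) (\<lambda>r. L_max f x r / l_min f x r) \<le> ereal H)"

definition hausdorff_dist :: "'a::metric_space set \<Rightarrow> 'a set \<Rightarrow> real" where
  "hausdorff_dist A B = max (SUP a\<in>A. infdist a B) (SUP b\<in>B. infdist b A)"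

text \<open>Reifenberg flatness.  Balls B(x,t) are taken closed; the minimum over
  hyperplanes is an infimum; HD is the library Hausdorff distance.\<close>
definition theta :: "'a::euclidean_space set \<Rightarrow> 'a \<Rightarrow> real \<Rightarrow> real" where
  "theta S x t = (INF L \<in> {L. subspace L \<and> dim L = DIM('a) - 1}.
      hausdorff_dist (S \<inter> cball x t) (((+) x ` L) \<inter> cball x t) / t)"

definition reifenberg_flat :: "real \<Rightarrow> real \<Rightarrow> 'a::euclidean_space set \<Rightarrow> bool" where
  "reifenberg_flat \<delta> R S \<longleftrightarrow> closed S \<and> (\<forall>x\<in>S. \<forall>t. 0 < t \<and> t \<le> R \<longrightarrow> theta S x t \<le> \<delta>)"

definition reifenberg_flat_vanishing :: "'a::euclidean_space set \<Rightarrow> bool" where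
  "reifenberg_flat_vanishing S \<longleftrightarrow> closed S \<and> (\<forall>\<delta>>0. \<exists>R>0. reifenberg_flat \<delta> R S)"

end

theory Submission
  imports Defs
begin

text \<open>If the three-point distortion of \<open>f\<close> is at most \<open>1 + e\<close> near a point \<open>z0\<close> of the
  sphere, compare images with \<open>f a\<close> and \<open>f b\<close>, where \<open>a\<close> and \<open>b\<close> lie on the normal line at
  distance \<open>\<rho>\<close> outside and inside.  Points inside the ball are nearer to \<open>b\<close> and points outside
  are nearer to a point \<open>a'\<close> close to \<open>a\<close>, so the images of points of the sphere are almost
  equidistant from \<open>f a\<close> and \<open>f b\<close>: they lie in a slab of width \<open>O(e + \<phi>) \<bar>f a - f b\<bar>\<close>
  around the bisecting hyperplane, where \<open>\<phi>\<close> bounds \<open>\<bar>f a - f a'\<bar>\<close> and is small because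
  halving distances shrinks image distances by a factor \<open>2/3\<close>.  Conversely every point of the
  hyperplane is close to the image sphere, since the short normal segment through it joins the
  image of the inner ball to the outside of the image of the closed ball.  Choosing \<open>\<rho>\<close> so
  that \<open>\<bar>f a - f z0\<bar>\<close> is twice the prescribed radius gives the flatness estimate at every scale.\<close>

section \<open>Three-point distortion\<close>

definition H_bounded :: "('a::euclidean_space \<Rightarrow> 'a) \<Rightarrow> 'a set \<Rightarrow> real \<Rightarrow> bool" where
  "H_bounded f C e \<longleftrightarrow> (\<forall>x\<in>C. \<forall>y\<in>C. \<forall>w\<in>C. x \<noteq> w \<and> dist x y \<le> dist x w \<longrightarrow>
      norm (f x - f y) \<le> (1+e) * norm (f x - f w))"

lemma H_boundedD:
  "H_bounded f C e \<Longrightarrow> x \<in> C \<Longrightarrow> y \<in> C \<Longrightarrow> w \<in> C \<Longrightarrow> x \<noteq> w \<Longrightarrow> dist x y \<le> dist x w \<Longrightarrow>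
    norm (f x - f y) \<le> (1+e) * norm (f x - f w)"
  unfolding H_bounded_def by blast

lemma H_tilde_le_imp_H_bounded:
  fixes f :: "'a::euclidean_space \<Rightarrow> 'a"
  assumes "H_tilde f C \<le> ereal e" "inj f"
  shows "H_bounded f C e"
  unfolding H_bounded_def
proof (intro ballI impI)
  fix x y w assume xyw: "x \<in> C" "y \<in> C" "w \<in> C" and c: "x \<noteq> w \<and> dist x y \<le> dist x w"
  have "ereal (norm (f x - f y) / norm (f x - f w)) \<le> H_dist f C"
    unfolding H_dist_def by (rule SUP_upper2[where i="(x,y,w)"]) (use xyw c in auto)
  also have "H_dist f C \<le> ereal (1+e)"
    using assms(1) unfolding H_tilde_def by (cases "H_dist f C") (auto simp: one_ereal_def)
  finally have "norm (f x - f y) / norm (f x - f w) \<le> 1+e" by simp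
  moreover have "f x \<noteq> f w" using assms(2) c by (auto dest: injD)
  ultimately show "norm (f x - f y) \<le> (1+e) * norm (f x - f w)" by (simp add: field_simps)
qed

lemma eventually_H_bounded_on_sphere:
  fixes f :: "'a::euclidean_space \<Rightarrow> 'a"
  assumes "((\<lambda>r. SUP z \<in> sphere (0::'a) 1. H_tilde f (ball z r)) \<longlongrightarrow> 0) (at_right 0)"
    and "inj f" and "0 < e"
  shows "eventually (\<lambda>r. \<forall>z \<in> sphere 0 1. H_bounded f (ball z r) e) (at_right 0)"
proof -
  have "eventually (\<lambda>r. (SUP z \<in> sphere (0::'a) 1. H_tilde f (ball z r)) < ereal e) (at_right 0)"
    using order_tendstoD(2)[OF assms(1), of "ereal e"] assms(3) by simp
  then show ?thesis
  proof (rule eventually_mono)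
    fix r assume sup: "(SUP z \<in> sphere (0::'a) 1. H_tilde f (ball z r)) < ereal e"
    show "\<forall>z \<in> sphere 0 1. H_bounded f (ball z r) e"
    proof
      fix z :: 'a assume "z \<in> sphere 0 1"
      hence "H_tilde f (ball z r) \<le> (SUP z \<in> sphere (0::'a) 1. H_tilde f (ball z r))"
        by (rule SUP_upper)
      with sup show "H_bounded f (ball z r) e"
        by (intro H_tilde_le_imp_H_bounded assms(2)) simp
    qed
  qed
qed

section \<open>Images of balls under homeomorphisms\<close>

lemma homeomorphism_UNIV_inj: "homeomorphism UNIV UNIV f g \<Longrightarrow> inj f"
  by (metis homeomorphism_apply1 UNIV_I injI)

text \<open>Pull \<open>K\<close> back by the inverse homeomorphism and use the frontier of the ball.\<close>
lemma connected_meets_image_sphere: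
  fixes f :: "'a::euclidean_space \<Rightarrow> 'a"
  assumes hom: "homeomorphism UNIV UNIV f g" and K: "connected K"
    and inside: "K \<inter> f ` ball c r \<noteq> {}" and outside: "K - f ` cball c r \<noteq> {}"
  shows "K \<inter> f ` sphere c r \<noteq> {}"
proof -
  have gf: "g (f x) = x" and fg: "f (g y) = y" for x y
    using homeomorphism_apply1[OF hom] homeomorphism_apply2[OF hom] by auto
  obtain x where x: "x \<in> ball c r" "f x \<in> K" using inside by blast
  have r: "0 < r" using x(1) by (simp add: le_less_trans[OF zero_le_dist])
  have "connected (g ` K)"
    using K homeomorphism_cont2[OF hom] continuous_on_subset
    by (blast intro: connected_continuous_image)
  moreover have "g ` K \<inter> ball c r \<noteq> {}" using x gf by (metis IntI empty_iff image_eqI)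
  moreover have "g ` K - ball c r \<noteq> {}"
  proof -
    obtain k where k: "k \<in> K" "k \<notin> f ` cball c r" using outside by blast
    have "g k \<notin> cball c r" using k(2) fg by (metis image_eqI)
    thus ?thesis using k(1) by auto
  qed
  ultimately have "g ` K \<inter> frontier (ball c r) \<noteq> {}" by (rule connected_Int_frontier)
  then obtain k where "k \<in> K" "g k \<in> sphere c r" using r by (auto simp del: mem_sphere)
  thus ?thesis using fg by (metis IntI empty_iff image_eqI)
qed

lemma cball_subset_image_ball:
  fixes f :: "'a::euclidean_space \<Rightarrow> 'a"
  assumes hom: "homeomorphism UNIV UNIV f g" and r: "0 < r"
    and far: "\<And>w. w \<in> sphere c r \<Longrightarrow> t < dist (f w) (f c)"
  shows "cball (f c) t \<subseteq> f ` ball c r"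
proof
  fix q assume q: "q \<in> cball (f c) t"
  have no_sphere: "cball (f c) t \<inter> f ` sphere c r = {}"
    using far by (force simp: dist_commute)
  show "q \<in> f ` ball c r"
  proof (rule ccontr)
    assume "q \<notin> f ` ball c r"
    moreover have "q \<notin> f ` sphere c r" using q no_sphere by blast
    moreover have "cball c r = ball c r \<union> sphere c r" by auto
    ultimately have "q \<notin> f ` cball c r" by auto
    hence outside: "cball (f c) t - f ` cball c r \<noteq> {}" using q by blast
    have "f c \<in> cball (f c) t" using q order_trans[OF zero_le_dist[of "f c" q]] by simp
    moreover have "f c \<in> f ` ball c r" using r by simp
    ultimately have "cball (f c) t \<inter> f ` ball c r \<noteq> {}" by blast
    hence "cball (f c) t \<inter> f ` sphere c r \<noteq> {}"
      using outside by (rule connected_meets_image_sphere[OF hom connected_cball])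
    with no_sphere show False by blast
  qed
qed

text \<open>Follow the ray from \<open>f p\<close> pointing away from \<open>f u\<close>: it starts in \<open>f ` ball p r\<close> and leaves
  the bounded set \<open>f ` cball p r\<close>, so it crosses \<open>f ` sphere p r\<close>.\<close>
lemma image_sphere_meets_ray:
  fixes f :: "'a::euclidean_space \<Rightarrow> 'a"
  assumes hom: "homeomorphism UNIV UNIV f g" and r: "0 < r" and ne: "f u \<noteq> f p"
  shows "\<exists>w \<in> sphere p r. norm (f u - f w) = norm (f u - f p) + norm (f p - f w)"
proof -
  define d where "d = f p - f u"
  have d0: "norm d > 0" using ne unfolding d_def by simp
  define K where "K = (\<lambda>l. f p + l *\<^sub>R d) ` {0..}"
  have cK: "connected K" unfolding K_def
    by (intro connected_continuous_image continuous_intros) (simp add: is_interval_connected)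
  have "f p \<in> K \<inter> f ` ball p r" unfolding K_def using r by force
  hence inside: "K \<inter> f ` ball p r \<noteq> {}" by blast
  have "compact (f ` cball p r)"
    using homeomorphism_cont1[OF hom] by (intro compact_continuous_image) (auto intro: continuous_on_subset)
  then obtain B where B: "\<And>y. y \<in> f ` cball p r \<Longrightarrow> norm y \<le> B"
    using compact_imp_bounded bounded_iff by metis
  define l where "l = (\<bar>B\<bar> + norm (f p) + 1) / norm d"
  have l0: "l \<ge> 0" unfolding l_def using d0 by simp
  have "norm (l *\<^sub>R d) = \<bar>B\<bar> + norm (f p) + 1" unfolding l_def using d0 by simp
  hence "norm (f p + l *\<^sub>R d) \<ge> \<bar>B\<bar> + 1"
    using norm_triangle_ineq2[of "l *\<^sub>R d" "- f p"] by (simp add: add.commute)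
  hence "f p + l *\<^sub>R d \<notin> f ` cball p r" using B by force
  moreover have "f p + l *\<^sub>R d \<in> K" unfolding K_def using l0 by auto
  ultimately have outside: "K - f ` cball p r \<noteq> {}" by blast
  obtain w where w: "w \<in> sphere p r" "f w \<in> K"
    using connected_meets_image_sphere[OF hom cK inside outside] by blast
  then obtain l' where l': "l' \<ge> 0" "f w = f p + l' *\<^sub>R d" unfolding K_def by auto
  have "f u - f w = - ((1 + l') *\<^sub>R d)" using l' unfolding d_def by (simp add: algebra_simps)
  hence "norm (f u - f w) = (1 + l') * norm d" using l' by simp
  moreover have "norm (f p - f w) = l' * norm d" using l' by simp
  moreover have "norm (f u - f p) = norm d" unfolding d_def by (simp add: norm_minus_commute)
  ultimately show ?thesis using w by (intro bexI[of _ w]) (auto simp: algebra_simps)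
qed

section \<open>Geometric decay of image distances\<close>

lemma one_plus_cube_le:
  fixes e :: real
  assumes "0 \<le> e" "e \<le> 1/10"
  shows "(1+e)^3 \<le> 2/3 * (2+e)"
proof -
  have e2: "e^2 \<le> e/10"
    using mult_left_mono[OF assms(2) assms(1)] by (simp add: power2_eq_square)
  have "e^3 \<le> e^2/10"
    using mult_left_mono[OF assms(2), of "e^2"] by (simp add: power2_eq_square power3_eq_cube)
  moreover have "(1+e)^3 = 1 + 3*e + 3*e^2 + e^3"
    by (simp add: power3_eq_cube power2_eq_square algebra_simps)
  ultimately have "(1+e)^3 \<le> 1 + 3*e + 3*(e/10) + e/100" using e2 by linarith
  thus ?thesis using assms by (simp add: algebra_simps)
qed

lemma two_thirds_bound:
  fixes e A N :: real
  assumes e: "0 \<le> e" "e \<le> 1/10" and A: "0 \<le> A" and AN: "A + A / (1+e) \<le> (1+e) * N"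
  shows "(1+e) * A \<le> 2/3 * N"
proof -
  have "A + A/(1+e) = A * (2+e)/(1+e)" using e by (simp add: field_simps)
  hence "A * (2+e) \<le> (1+e)^2 * N" using AN e by (simp add: field_simps power2_eq_square)
  hence "((1+e) * A) * (2+e) \<le> (1+e)^3 * N"
    using mult_left_mono[of _ _ "1+e"] e by (simp add: power2_eq_square power3_eq_cube mult_ac)
  also have "\<dots> \<le> (2/3 * (2+e)) * N"
  proof (rule mult_right_mono[OF one_plus_cube_le[OF e]])
    have "0 \<le> (1+e) * N" using AN A e by (smt (verit) divide_nonneg_nonneg)
    thus "0 \<le> N" using e by (simp add: zero_le_mult_iff)
  qed
  finally have "((1+e) * A) * (2+e) \<le> (2/3 * N) * (2+e)" by (simp add: mult_ac)
  thus ?thesis using e by simp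
qed

text \<open>With \<open>p\<close>
  the midpoint of \<open>[a, v]\<close> and \<open>w'\<close> on the sphere about \<open>p\<close> through \<open>a\<close> beyond \<open>f p\<close> as seen from
  \<open>f a\<close>, the three-point bound gives \<open>\<bar>f a - f p\<bar> (1 + 1/(1+e)) \<le> \<bar>f a - f w'\<bar> \<le> (1+e) \<bar>f a - f v\<bar>\<close>.\<close>
lemma H_bounded_half_distance:
  fixes f :: "'a::euclidean_space \<Rightarrow> 'a"
  assumes hom: "homeomorphism UNIV UNIV f g" and H: "H_bounded f C e" and e: "0 \<le> e" "e \<le> 1/10"
    and C: "cball a (dist a v) \<subseteq> C" and av: "a \<noteq> v" and w: "dist a w \<le> dist a v / 2"
  shows "norm (f a - f w) \<le> 2/3 * norm (f a - f v)"
proof -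
  define r where "r = dist a v / 2"
  define p where "p = a + (1/2) *\<^sub>R (v - a)"
  have r0: "r > 0" using av unfolding r_def by simp
  have ap: "dist a p = r" "dist p a = r"
    unfolding p_def r_def dist_norm by (simp_all add: norm_minus_commute)
  hence "a \<noteq> p" using r0 by auto
  hence "f a \<noteq> f p" using homeomorphism_UNIV_inj[OF hom] by (auto dest: injD)
  then obtain w' where w': "w' \<in> sphere p r"
     and ray: "norm (f a - f w') = norm (f a - f p) + norm (f p - f w')"
    using image_sphere_meets_ray[OF hom r0] by blast
  have daw': "dist a w' \<le> dist a v" using dist_triangle[of a w' p] ap w' unfolding r_def by simp
  have "p \<noteq> w'" using w' r0 by auto
  have "dist a p \<le> dist a v" "dist a w \<le> dist a v" using ap w r0 unfolding r_def by linarith+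
  hence inC: "a \<in> C" "v \<in> C" "p \<in> C" "w' \<in> C" "w \<in> C"
    using C daw' by (auto simp: subset_iff)
  have "norm (f a - f w') \<le> (1+e) * norm (f a - f v)"
    by (rule H_boundedD[OF H]) (use inC av daw' in auto)
  moreover have "norm (f p - f a) \<le> (1+e) * norm (f p - f w')"
    by (rule H_boundedD[OF H]) (use inC \<open>p \<noteq> w'\<close> ap w' in auto)
  hence "norm (f a - f p) / (1+e) \<le> norm (f p - f w')"
    using e by (simp add: field_simps norm_minus_commute)
  ultimately have "norm (f a - f p) + norm (f a - f p) / (1+e) \<le> (1+e) * norm (f a - f v)"
    using ray by linarith
  hence "(1+e) * norm (f a - f p) \<le> 2/3 * norm (f a - f v)"
    by (rule two_thirds_bound[OF e norm_ge_zero])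
  moreover have "norm (f a - f w) \<le> (1+e) * norm (f a - f p)"
    by (rule H_boundedD[OF H]) (use inC \<open>a \<noteq> p\<close> ap w in \<open>auto simp: r_def\<close>)
  ultimately show ?thesis by linarith
qed

lemma H_bounded_geometric_decay:
  fixes f :: "'a::euclidean_space \<Rightarrow> 'a"
  assumes hom: "homeomorphism UNIV UNIV f g" and H: "H_bounded f C e" and e: "0 \<le> e" "e \<le> 1/10"
  shows "cball a (dist a v) \<subseteq> C \<Longrightarrow> a \<noteq> v \<Longrightarrow> dist a w \<le> dist a v / 2^k \<Longrightarrow>
     norm (f a - f w) \<le> (1+e) * (2/3)^k * norm (f a - f v)"
proof (induction k arbitrary: v)
  case 0
  have "a \<in> C" "v \<in> C" "w \<in> C" using 0 by (auto simp: subset_iff)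
  thus ?case using H_boundedD[OF H, of a w v] 0 by auto
next
  case (Suc k)
  define v' where "v' = a + (1/2) *\<^sub>R (v - a)"
  have d': "dist a v' = dist a v / 2" unfolding v'_def dist_norm by (simp add: norm_minus_commute)
  have "a \<noteq> v'" using d' Suc.prems(2) by auto
  have "dist a v' \<le> dist a v" using d' zero_le_dist[of a v] by linarith
  hence "cball a (dist a v') \<subseteq> C" using Suc.prems(1) by (auto simp: subset_iff)
  moreover have "dist a w \<le> dist a v' / 2^k" using Suc.prems(3) d' by (simp add: field_simps)
  ultimately have "norm (f a - f w) \<le> (1+e) * (2/3)^k * norm (f a - f v')"
    using Suc.IH \<open>a \<noteq> v'\<close> by blast
  also have "\<dots> \<le> (1+e) * (2/3)^k * (2/3 * norm (f a - f v))"
    using H_bounded_half_distance[OF hom H e Suc.prems(1,2)] d' e by (intro mult_left_mono) auto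
  finally show ?case by (simp add: mult_ac)
qed

lemma sq_diff_le_of_almost_le:
  fixes e p P Q D :: real
  assumes e: "0 \<le> e" "e \<le> 1/10" and p: "0 \<le> p" "p \<le> 1"
    and "0 \<le> P" "0 \<le> Q" "0 \<le> D" and PQ: "P \<le> (1+e)*Q + p*D" and QD: "Q \<le> (1+e)*D"
  shows "P^2 - Q^2 \<le> (4*e + 4*p)*D^2"
proof -
  have e2: "(1+e)^2 \<le> 121/100"
    using power_mono[of "1+e" "11/10" 2] e by (simp add: power2_eq_square)
  have "P^2 \<le> ((1+e)*Q + p*D)^2" by (rule power_mono) (use assms in auto)
  also have "\<dots> = (1+e)^2*Q^2 + 2*(1+e)*p*(Q*D) + p^2*D^2"
    by (simp add: power2_eq_square algebra_simps)
  finally have P2: "P^2 \<le> (1+e)^2*Q^2 + 2*(1+e)*p*(Q*D) + p^2*D^2" .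
  have "(1+e)^2*Q^2 - Q^2 = (e*(2+e)) * Q^2" by (simp add: power2_eq_square algebra_simps)
  also have "\<dots> \<le> (e*(2+e)) * ((1+e)*D)^2"
    using power_mono[OF QD] e assms by (intro mult_left_mono) auto
  also have "\<dots> = (e*((2+e)*(1+e)^2)) * D^2" by (simp add: power_mult_distrib)
  also have "\<dots> \<le> (e*4) * D^2"
    using mult_mono[of "2+e" "21/10" "(1+e)^2" "121/100"] e e2
    by (intro mult_right_mono mult_left_mono) auto
  finally have B1: "(1+e)^2*Q^2 - Q^2 \<le> 4*e*D^2" by simp
  have "Q*D \<le> ((1+e)*D)*D" using QD assms by (intro mult_right_mono) auto
  hence "2*(1+e)*p*(Q*D) \<le> 2*(1+e)*p*(((1+e)*D)*D)" using assms by (intro mult_left_mono) auto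
  also have "\<dots> = (2*(1+e)^2) * (p*D^2)" by (simp add: power2_eq_square algebra_simps)
  also have "\<dots> \<le> 3 * (p*D^2)" using e2 assms by (intro mult_right_mono) auto
  finally have B2: "2*(1+e)*p*(Q*D) \<le> 3*p*D^2" by simp
  have "p^2*D^2 \<le> p*D^2"
    using mult_left_mono[OF p(2) p(1)] by (intro mult_right_mono) (auto simp: power2_eq_square)
  thus ?thesis using P2 B1 B2 by (simp add: algebra_simps)
qed

lemma norm_diff_scaleR_sq:
  fixes w u :: "'a::real_inner"
  shows "(norm (w - c *\<^sub>R u))^2 = (norm w)^2 - 2*c*(w \<bullet> u) + c^2*(u \<bullet> u)"
  unfolding power2_norm_eq_inner
  by (simp add: inner_diff_left inner_diff_right inner_commute algebra_simps power2_eq_square)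

lemma norm_sq_diff_eq_inner:
  fixes q A B :: "'a::real_inner"
  shows "(norm (q - A))^2 - (norm (q - B))^2 = -2 * ((q - (1/2) *\<^sub>R (A+B)) \<bullet> (A - B))"
  unfolding power2_norm_eq_inner
  by (simp add: inner_diff_left inner_diff_right inner_add_left inner_add_right inner_commute algebra_simps)

lemma hausdorff_dist_nonneg:
  fixes A B :: "'a::metric_space set"
  assumes "x \<in> A" "x \<in> B" "A \<subseteq> cball x t"
  shows "0 \<le> hausdorff_dist A B"
proof -
  have "bdd_above ((\<lambda>a. infdist a B) ` A)"
  proof (rule bdd_aboveI2)
    fix a assume "a \<in> A"
    have "infdist a B \<le> dist a x" using assms(2) by (rule infdist_le)
    also have "\<dots> \<le> t" using assms(3) \<open>a \<in> A\<close> by (auto simp: dist_commute)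
    finally show "infdist a B \<le> t" .
  qed
  hence "infdist x B \<le> (SUP a\<in>A. infdist a B)" using assms(1) by (intro cSUP_upper)
  hence "0 \<le> (SUP a\<in>A. infdist a B)" using infdist_nonneg[of x B] by linarith
  thus ?thesis unfolding hausdorff_dist_def by linarith
qed

lemma hausdorff_dist_le:
  fixes A B :: "'a::metric_space set"
  assumes "A \<noteq> {}" "B \<noteq> {}"
    and "\<And>a. a \<in> A \<Longrightarrow> \<exists>b \<in> B. dist a b \<le> c" and "\<And>b. b \<in> B \<Longrightarrow> \<exists>a \<in> A. dist b a \<le> c"
  shows "hausdorff_dist A B \<le> c"
proof -
  have "(SUP a\<in>A. infdist a B) \<le> c"
  proof (rule cSUP_least[OF assms(1)])
    fix a assume "a \<in> A"
    then obtain b where "b \<in> B" "dist a b \<le> c" using assms(3) by blast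
    thus "infdist a B \<le> c" using infdist_le[of b B a] by linarith
  qed
  moreover have "(SUP b\<in>B. infdist b A) \<le> c"
  proof (rule cSUP_least[OF assms(2)])
    fix b assume "b \<in> B"
    then obtain a where "a \<in> A" "dist b a \<le> c" using assms(4) by blast
    thus "infdist b A \<le> c" using infdist_le[of a A b] by linarith
  qed
  ultimately show ?thesis unfolding hausdorff_dist_def by simp
qed

lemma theta_le_hyperplane:
  fixes S :: "'a::euclidean_space set"
  assumes u: "u \<noteq> 0" and x: "x \<in> S" and t: "0 < t"
    and S_near: "\<And>q. q \<in> S \<inter> cball x t \<Longrightarrow> \<exists>p \<in> (+) x ` {v. u \<bullet> v = 0} \<inter> cball x t. dist q p \<le> c"
    and near_S: "\<And>p. p \<in> (+) x ` {v. u \<bullet> v = 0} \<inter> cball x t \<Longrightarrow> \<exists>q \<in> S \<inter> cball x t. dist p q \<le> c"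
  shows "theta S x t \<le> c / t"
proof -
  let ?LL = "{L. subspace L \<and> dim L = DIM('a) - 1}"
  have x_in: "x \<in> (+) x ` L \<inter> cball x t" if "subspace L" for L
    using t subspace_0[OF that] by (auto intro: image_eqI[of _ _ 0])
  have hyperplane: "{v. u \<bullet> v = 0} \<in> ?LL" using subspace_hyperplane dim_hyperplane[OF u] by auto
  have "bdd_below ((\<lambda>L. hausdorff_dist (S \<inter> cball x t) ((+) x ` L \<inter> cball x t) / t) ` ?LL)"
  proof (rule bdd_belowI2)
    fix L :: "'a set" assume "L \<in> ?LL"
    hence "0 \<le> hausdorff_dist (S \<inter> cball x t) ((+) x ` L \<inter> cball x t)"
      using x t x_in by (intro hausdorff_dist_nonneg[of x _ _ t]) auto
    thus "0 \<le> hausdorff_dist (S \<inter> cball x t) ((+) x ` L \<inter> cball x t) / t" using t by simp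
  qed
  hence "theta S x t \<le> hausdorff_dist (S \<inter> cball x t) ((+) x ` {v. u \<bullet> v = 0} \<inter> cball x t) / t"
    unfolding theta_def by (rule cINF_lower[OF _ hyperplane])
  also have "\<dots> \<le> c / t"
  proof (rule divide_right_mono[OF hausdorff_dist_le])
    show "S \<inter> cball x t \<noteq> {}" using x t by auto
    show "(+) x ` {v. u \<bullet> v = 0} \<inter> cball x t \<noteq> {}" using x_in[OF subspace_hyperplane] by blast
  qed (use S_near near_S t in auto)
  finally show ?thesis .
qed

section \<open>Flatness at one point and one scale\<close>

locale sphere_scale =
  fixes f g :: "'a::euclidean_space \<Rightarrow> 'a" and z0 :: 'a and \<rho> e :: real
  assumes hom: "homeomorphism UNIV UNIV f g"
    and z0: "norm z0 = 1" and rho: "0 < \<rho>" "\<rho> \<le> 1/2"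
    and bounded: "H_bounded f (ball z0 (4*\<rho>)) e" and e: "0 < e" "e \<le> 1/10"
begin

definition a :: 'a where "a = (1+\<rho>) *\<^sub>R z0"
definition b :: 'a where "b = (1-\<rho>) *\<^sub>R z0"
definition a' :: 'a where "a' = (1+\<rho>-\<rho>^2) *\<^sub>R z0"
definition u :: 'a where "u = f a - f b"
definition D :: real where "D = norm u"
definition t :: real where "t = norm (f a - f z0) / 2"

lemma inj: "inj f"
  using hom by (rule homeomorphism_UNIV_inj)

lemma dist_z0_scaleR: "dist z0 (c *\<^sub>R z0) = \<bar>1 - c\<bar>"
proof -
  have "z0 - c *\<^sub>R z0 = (1 - c) *\<^sub>R z0" by (simp add: algebra_simps)
  thus ?thesis using z0 by (simp add: dist_norm)
qed

lemma dist_points: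
  "dist z0 a = \<rho>" "dist z0 b = \<rho>" "dist z0 a' \<le> \<rho>" "dist a b = 2*\<rho>" "dist a a' = \<rho>^2"
proof -
  show "dist z0 a = \<rho>" "dist z0 b = \<rho>"
    using dist_z0_scaleR[of "1+\<rho>"] dist_z0_scaleR[of "1-\<rho>"] rho by (auto simp: a_def b_def)
  have "\<rho>^2 \<le> \<rho>" using rho by (simp add: power2_eq_square mult_left_le_one_le)
  thus "dist z0 a' \<le> \<rho>" using dist_z0_scaleR[of "1+\<rho>-\<rho>^2"] rho by (auto simp: a'_def)
  have "a - b = ((1+\<rho>) - (1-\<rho>)) *\<^sub>R z0" "a - a' = ((1+\<rho>) - (1+\<rho>-\<rho>^2)) *\<^sub>R z0"
    unfolding a_def b_def a'_def by (simp_all only: scaleR_diff_left)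
  thus "dist a b = 2*\<rho>" "dist a a' = \<rho>^2" using z0 rho by (simp_all add: dist_norm)
qed

lemma points_in_ball:
  "z0 \<in> ball z0 (4*\<rho>)" "a \<in> ball z0 (4*\<rho>)" "b \<in> ball z0 (4*\<rho>)" "a' \<in> ball z0 (4*\<rho>)"
  "dist z0 y < \<rho> \<Longrightarrow> y \<in> ball z0 (4*\<rho>)"
  using dist_points rho by auto

lemma D_pos: "0 < D"
proof -
  have "a \<noteq> b" using dist_points(4) rho by auto
  thus ?thesis using inj by (simp add: D_def u_def inj_eq)
qed

lemma t_pos: "0 < t"
proof -
  have "a \<noteq> z0" using dist_points(1) rho by auto
  thus ?thesis using inj by (simp add: t_def inj_eq)
qed

lemma D_le_5t: "D \<le> 5*t"
proof -
  have "dist z0 b \<le> dist z0 a" "z0 \<noteq> a" using dist_points rho by auto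
  hence "norm (f z0 - f b) \<le> (1+e) * norm (f z0 - f a)"
    by (intro H_boundedD[OF bounded]) (use points_in_ball in auto)
  moreover have "D \<le> norm (f a - f z0) + norm (f z0 - f b)"
    unfolding D_def u_def by (rule norm_diff_triangle_le[of _ "f z0"]) simp_all
  ultimately have "D \<le> 2*t + (1+e)*(2*t)" by (simp add: t_def norm_minus_commute)
  moreover have "(1+e)*(2*t) \<le> (11/10)*(2*t)" using e t_pos by (intro mult_right_mono) auto
  ultimately show ?thesis using t_pos by linarith
qed

lemma image_dist_le_D:
  assumes "dist z0 y < \<rho>"
  shows "norm (f y - f a) \<le> (1+e)*D" "norm (f y - f b) \<le> (1+e)*D"
proof -
  have "dist a y \<le> dist a b" "dist b y \<le> dist b a" "a \<noteq> b"
    using dist_triangle[of a y z0] dist_triangle[of b y z0] assms dist_points rho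
    by (auto simp: dist_commute)
  moreover note points_in_ball(2,3) points_in_ball(5)[OF assms]
  ultimately have "norm (f a - f y) \<le> (1+e) * norm (f a - f b)" "norm (f b - f y) \<le> (1+e) * norm (f b - f a)"
    using H_boundedD[OF bounded] by metis+
  thus "norm (f y - f a) \<le> (1+e)*D" "norm (f y - f b) \<le> (1+e)*D"
    by (simp_all add: D_def u_def norm_minus_commute)
qed

lemma norm_diff_scaleR_z0_sq: "(norm (y - c *\<^sub>R z0))^2 = y \<bullet> y - 2*c*(y \<bullet> z0) + c^2"
proof -
  have "z0 \<bullet> z0 = 1" using z0 by (simp add: norm_eq_1)
  thus ?thesis using norm_diff_scaleR_sq[of y c z0] by (simp add: power2_norm_eq_inner)
qed

lemma image_ball_covers_cball: "cball (f z0) t \<subseteq> f ` ball z0 \<rho>"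
proof (rule cball_subset_image_ball[OF hom rho(1)])
  fix w assume w: "w \<in> sphere z0 \<rho>"
  have "dist z0 a \<le> dist z0 w" "z0 \<noteq> w" "w \<in> ball z0 (4*\<rho>)" using w dist_points rho by auto
  hence "norm (f z0 - f a) \<le> (1+e) * norm (f z0 - f w)"
    by (intro H_boundedD[OF bounded]) (use points_in_ball in auto)
  hence "2*t \<le> (1+e) * dist (f w) (f z0)" by (simp add: t_def dist_norm norm_minus_commute)
  moreover have "(1+e) * dist (f w) (f z0) \<le> (11/10) * dist (f w) (f z0)"
    using e by (intro mult_right_mono) auto
  ultimately show "t < dist (f w) (f z0)" using t_pos by linarith
qed

lemma dist_z0_lt_of_image_in_cball: "f y \<in> cball (f z0) t \<Longrightarrow> dist z0 y < \<rho>"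
  using image_ball_covers_cball inj by (auto simp: inj_eq)

lemma geometric_decay:
  assumes "\<rho> * 2^k \<le> 2"
  shows "norm (f a - f a') \<le> (1+e) * (2/3)^k * D"
proof -
  have "cball a (dist a b) \<subseteq> ball z0 (4*\<rho>)"
  proof
    fix p assume "p \<in> cball a (dist a b)"
    thus "p \<in> ball z0 (4*\<rho>)" using dist_triangle[of z0 p a] dist_points rho by simp
  qed
  moreover have "a \<noteq> b" using dist_points rho by auto
  moreover have "\<rho>^2 * 2^k \<le> 2*\<rho>"
    using mult_left_mono[OF assms, of \<rho>] rho by (simp add: power2_eq_square mult.assoc)
  hence "dist a a' \<le> dist a b / 2^k" using dist_points by (simp add: field_simps)
  ultimately show ?thesis
    using H_bounded_geometric_decay[OF hom bounded] e by (simp add: D_def u_def)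
qed

end

locale sphere_flatness = sphere_scale +
  fixes \<phi> :: real
  assumes phi: "0 \<le> \<phi>" and e_phi_small: "30 * (e + \<phi>) \<le> 1"
    and decay: "norm (f a - f a') \<le> \<phi> * D"
begin

definition h :: real where "h = 2*e + 2*\<phi>"
definition G :: "'a \<Rightarrow> real" where "G q = (q - (1/2) *\<^sub>R (f a + f b)) \<bullet> u"

lemma e_le_h: "2*e \<le> h" and h_pos: "0 < h" and phi_le_1: "\<phi> \<le> 1"
  using e phi e_phi_small by (auto simp: h_def)

lemma G_eq: "G q = ((norm (q - f b))^2 - (norm (q - f a))^2) / 2"
  using norm_sq_diff_eq_inner[of q "f a" "f b"] by (simp add: G_def u_def)

lemma G_diff: "G q - G r = (q - r) \<bullet> u"
  by (simp add: G_def inner_diff_left)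

lemma G_image_inside:
  assumes y: "dist z0 y < \<rho>" "norm y \<le> 1"
  shows "G (f y) \<le> 2*e*D^2"
proof -
  have "y \<bullet> z0 \<le> 1" using norm_cauchy_schwarz[of y z0] y z0 by simp
  hence "0 \<le> 4*\<rho>*(1 - y \<bullet> z0)" using rho by simp
  moreover have "(norm (y - a))^2 - (norm (y - b))^2 = 4*\<rho>*(1 - y \<bullet> z0)"
    by (simp only: norm_diff_scaleR_z0_sq a_def b_def) (simp add: power2_eq_square algebra_simps)
  ultimately have "(norm (y - b))^2 \<le> (norm (y - a))^2" by linarith
  hence "dist y b \<le> dist y a" unfolding dist_norm by (rule power2_le_imp_le) simp
  moreover have "y \<noteq> a" using y dist_points by auto
  ultimately have "norm (f y - f b) \<le> (1+e) * norm (f y - f a)"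
    by (intro H_boundedD[OF bounded]) (use points_in_ball y in auto)
  hence "(norm (f y - f b))^2 - (norm (f y - f a))^2 \<le> (4*e + 4*0)*D^2"
    using e image_dist_le_D(1)[OF y(1)] D_pos
    by (intro sq_diff_le_of_almost_le) auto
  thus ?thesis using G_eq[of "f y"] by simp
qed

text \<open>Outside the ball the comparison point is \<open>a'\<close> rather than \<open>a\<close>; \<open>decay\<close> makes up for the
  difference.\<close>
lemma G_image_outside:
  assumes y: "dist z0 y < \<rho>" "norm y \<ge> 1"
  shows "- (h*D^2) \<le> G (f y)"
proof -
  have "(norm (y - z0))^2 < \<rho>^2" using y rho by (simp add: dist_norm norm_minus_commute power_strict_mono)
  moreover have "1 \<le> y \<bullet> y" using y by (metis norm_ge_zero one_le_power power2_norm_eq_inner)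
  ultimately have "2 - \<rho>^2 \<le> 2*(y \<bullet> z0)" using norm_diff_scaleR_z0_sq[of y 1] by simp
  moreover have "(norm (y - a'))^2 - (norm (y - b))^2 = (2*\<rho> - \<rho>^2) * (2 - \<rho>^2 - 2*(y \<bullet> z0))"
    by (simp only: norm_diff_scaleR_z0_sq a'_def b_def) (simp add: power2_eq_square algebra_simps)
  moreover have "\<rho>^2 \<le> 2*\<rho>" using rho by (simp add: power2_eq_square)
  ultimately have "(norm (y - a'))^2 - (norm (y - b))^2 \<le> 0" by (simp add: mult_nonneg_nonpos)
  hence "(norm (y - a'))^2 \<le> (norm (y - b))^2" by linarith
  hence "dist y a' \<le> dist y b" unfolding dist_norm by (rule power2_le_imp_le) simp
  moreover have "y \<noteq> b" using y dist_points by auto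
  ultimately have "norm (f y - f a') \<le> (1+e) * norm (f y - f b)"
    by (intro H_boundedD[OF bounded]) (use points_in_ball y in auto)
  moreover have "norm (f y - f a) \<le> norm (f y - f a') + norm (f a' - f a)"
    by (rule norm_diff_triangle_le[of _ "f a'"]) simp_all
  ultimately have "norm (f y - f a) \<le> (1+e) * norm (f y - f b) + \<phi> * D"
    using decay by (simp add: norm_minus_commute)
  hence "(norm (f y - f a))^2 - (norm (f y - f b))^2 \<le> (4*e + 4*\<phi>)*D^2"
    using e phi phi_le_1 D_pos image_dist_le_D(2)[OF y(1)]
    by (intro sq_diff_le_of_almost_le) auto
  thus ?thesis using G_eq[of "f y"] by (simp add: h_def algebra_simps)
qed

lemma G_image_sphere:
  assumes "dist z0 y < \<rho>" "norm y = 1"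
  shows "\<bar>G (f y)\<bar> \<le> h*D^2"
proof -
  have "2*e*D^2 \<le> h*D^2" using e_le_h by (simp add: mult_right_mono)
  thus ?thesis using G_image_inside[of y] G_image_outside[of y] assms by (simp add: abs_le_iff)
qed

lemma G_z0: "\<bar>G (f z0)\<bar> \<le> h*D^2"
  using G_image_sphere[of z0] z0 rho by simp

lemma image_sphere_near_hyperplane:
  assumes q: "q \<in> f ` sphere 0 1 \<inter> cball (f z0) t"
  shows "\<exists>p \<in> (+) (f z0) ` {v. u \<bullet> v = 0} \<inter> cball (f z0) t. dist q p \<le> 30*h*t"
proof -
  obtain y where y: "norm y = 1" "q = f y" using q by auto
  have "dist z0 y < \<rho>" using q y by (intro dist_z0_lt_of_image_in_cball) simp
  hence "\<bar>G q\<bar> \<le> h*D^2" using G_image_sphere y by simp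
  define s where "s = (q - f z0) \<bullet> u"
  have s_abs: "\<bar>s\<bar> \<le> 2*h*D^2"
    using G_diff[of q "f z0"] \<open>\<bar>G q\<bar> \<le> h*D^2\<close> G_z0 unfolding s_def by linarith
  have uu: "u \<bullet> u = D^2" by (simp add: D_def power2_norm_eq_inner)
  define p where "p = q - (s / D^2) *\<^sub>R u"
  have "u \<bullet> (p - f z0) = 0"
    unfolding p_def s_def using D_pos uu by (simp add: inner_diff_right inner_diff_left inner_commute)
  hence in_plane: "p \<in> (+) (f z0) ` {v. u \<bullet> v = 0}" by (intro image_eqI[of _ _ "p - f z0"]) simp_all
  have "(norm (p - f z0))^2 = (norm (q - f z0))^2 - s^2 / D^2"
  proof -
    have "p - f z0 = (q - f z0) - (s / D^2) *\<^sub>R u" unfolding p_def by simp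
    hence "(norm (p - f z0))^2
        = (norm (q - f z0))^2 - 2*(s/D^2)*((q - f z0) \<bullet> u) + (s/D^2)^2*(u \<bullet> u)"
      by (simp only: norm_diff_scaleR_sq)
    also have "\<dots> = (norm (q - f z0))^2 - s^2/D^2"
      unfolding uu s_def[symmetric] using D_pos by (simp add: field_simps power2_eq_square)
    finally show ?thesis .
  qed
  moreover have "0 \<le> s^2 / D^2" by simp
  ultimately have "(norm (p - f z0))^2 \<le> (norm (q - f z0))^2" by linarith
  hence "norm (p - f z0) \<le> norm (q - f z0)" by (rule power2_le_imp_le) simp
  hence "dist (f z0) p \<le> dist (f z0) q" by (simp add: dist_norm norm_minus_commute)
  moreover have "dist (f z0) q \<le> t" using q by simp
  ultimately have in_ball: "p \<in> cball (f z0) t" by simp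
  have "dist q p \<le> 30*h*t"
  proof -
    have "dist q p = \<bar>s\<bar> / D" using D_pos by (simp add: p_def dist_norm D_def power2_eq_square)
    also have "\<dots> \<le> 2*h*D" using s_abs D_pos by (simp add: field_simps power2_eq_square)
    also have "\<dots> \<le> 2*h*(5*t)" using D_le_5t h_pos by (intro mult_left_mono) auto
    also have "\<dots> \<le> 30*h*t" using h_pos t_pos by simp
    finally show ?thesis .
  qed
  with in_plane in_ball show ?thesis by blast
qed

text \<open>The normal segment of half-length \<open>3 h D\<close> through a point of the hyperplane has its ends
  in the regions \<open>G > h D\<^sup>2\<close> and \<open>G < - h D\<^sup>2\<close>; so one end lies in the image of the open ball
  and the other outside the image of the closed ball.\<close>
lemma normal_segment_meets_image_sphere:
  assumes p: "u \<bullet> (p - f z0) = 0" "dist (f z0) p \<le> t - 3*h*D"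
  shows "\<exists>q \<in> f ` sphere 0 1 \<inter> cball (f z0) t. dist p q \<le> 3*h*D"
proof -
  define l where "l = 3*h*D"
  define \<nu> where "\<nu> = (1/D) *\<^sub>R u"
  have \<nu>: "norm \<nu> = 1" "\<nu> \<bullet> u = D"
    using D_pos by (simp_all add: \<nu>_def D_def power2_norm_eq_inner[symmetric] power2_eq_square)
  have l0: "0 < l" using h_pos D_pos by (simp add: l_def)
  have "cball p l \<subseteq> cball (f z0) t"
  proof
    fix y assume "y \<in> cball p l"
    thus "y \<in> cball (f z0) t" using p(2) dist_triangle[of "f z0" y p] by (simp add: l_def)
  qed
  moreover have ends: "p + l *\<^sub>R \<nu> \<in> cball p l" "p - l *\<^sub>R \<nu> \<in> cball p l"
    using \<nu> l0 by (simp_all add: dist_norm)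
  ultimately have ends_in: "p + l *\<^sub>R \<nu> \<in> cball (f z0) t" "p - l *\<^sub>R \<nu> \<in> cball (f z0) t" by blast+
  have G_normal: "G (p + c *\<^sub>R \<nu>) = G (f z0) + c * D" for c
    using G_diff[of "p + c *\<^sub>R \<nu>" "f z0"] p(1) \<nu>(2)
    by (simp add: inner_diff_left inner_add_left inner_commute algebra_simps)
  have G_ends: "G (p + l *\<^sub>R \<nu>) = G (f z0) + 3*h*D^2" "G (p - l *\<^sub>R \<nu>) = G (f z0) - 3*h*D^2"
    using G_normal[of l] G_normal[of "-l"] by (simp_all add: l_def power2_eq_square)
  have "2*e*D^2 \<le> h*D^2" using e_le_h by (simp add: mult_right_mono)
  have hD: "0 < h*D^2" using h_pos D_pos by simp
  have outside: "p + l *\<^sub>R \<nu> \<notin> f ` cball 0 1"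
  proof
    assume "p + l *\<^sub>R \<nu> \<in> f ` cball 0 1"
    then obtain y where "norm y \<le> 1" "p + l *\<^sub>R \<nu> = f y" by auto
    moreover from this have "dist z0 y < \<rho>" using ends_in by (intro dist_z0_lt_of_image_in_cball) simp
    ultimately have "G (p + l *\<^sub>R \<nu>) \<le> 2*e*D^2" using G_image_inside by simp
    thus False using G_ends G_z0 \<open>2*e*D^2 \<le> h*D^2\<close> hD by linarith
  qed
  have inside: "p - l *\<^sub>R \<nu> \<in> f ` ball 0 1"
  proof -
    obtain y where y: "y \<in> ball z0 \<rho>" "p - l *\<^sub>R \<nu> = f y" using ends_in image_ball_covers_cball by blast
    have "norm y < 1"
    proof (rule ccontr)
      assume "\<not> norm y < 1"
      hence "- (h*D^2) \<le> G (p - l *\<^sub>R \<nu>)" using G_image_outside[of y] y by simp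
      thus False using G_ends G_z0 hD by linarith
    qed
    thus ?thesis using y by auto
  qed
  obtain q where q: "q \<in> closed_segment (p - l *\<^sub>R \<nu>) (p + l *\<^sub>R \<nu>)" "q \<in> f ` sphere 0 1"
    using connected_meets_image_sphere[OF hom connected_segment, of "p - l *\<^sub>R \<nu>" "p + l *\<^sub>R \<nu>"]
      inside outside by blast
  have "closed_segment (p - l *\<^sub>R \<nu>) (p + l *\<^sub>R \<nu>) \<subseteq> cball p l"
    using ends by (intro closed_segment_subset) auto
  hence "dist p q \<le> l" using q(1) by auto
  moreover from this have "q \<in> cball (f z0) t"
    using \<open>cball p l \<subseteq> cball (f z0) t\<close> by (meson mem_cball subsetD)
  ultimately show ?thesis using q(2) unfolding l_def by blast
qed

lemma hyperplane_near_image_sphere: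
  assumes "p \<in> (+) (f z0) ` {v. u \<bullet> v = 0} \<inter> cball (f z0) t"
  shows "\<exists>q \<in> f ` sphere 0 1 \<inter> cball (f z0) t. dist p q \<le> 30*h*t"
proof -
  obtain v where v: "p = f z0 + v" "u \<bullet> v = 0" "norm v \<le> t" using assms by (auto simp: dist_norm)
  define l where "l = 3*h*D"
  have l0: "0 < l" using h_pos D_pos by (simp add: l_def)
  have "l \<le> 15*h*t" using D_le_5t h_pos by (simp add: l_def)
  moreover have "15*h*t \<le> 1*t" using e_phi_small t_pos by (intro mult_right_mono) (auto simp: h_def)
  ultimately have lt: "l \<le> t" by simp
  define p' where "p' = f z0 + (1 - l/t) *\<^sub>R v"
  have c01: "0 \<le> 1 - l/t" using lt t_pos by simp
  have "dist (f z0) p' = (1 - l/t) * norm v" using c01 by (simp add: p'_def dist_norm)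
  also have "\<dots> \<le> (1 - l/t) * t" using v c01 by (intro mult_left_mono) auto
  also have "\<dots> = t - l" using t_pos by (simp add: field_simps)
  finally have "dist (f z0) p' \<le> t - l" .
  moreover have "u \<bullet> (p' - f z0) = 0" using v by (simp add: p'_def)
  ultimately obtain q where q: "q \<in> f ` sphere 0 1 \<inter> cball (f z0) t" "dist p' q \<le> l"
    using normal_segment_meets_image_sphere[of p'] unfolding l_def by blast
  have "dist p p' = (l/t) * norm v" using l0 t_pos by (simp add: v(1) p'_def dist_norm algebra_simps)
  also have "\<dots> \<le> l" using v l0 t_pos by (simp add: field_simps)
  finally have "dist p q \<le> 2*l" using dist_triangle[of p q p'] q(2) by linarith
  also have "\<dots> \<le> 30*h*t" using D_le_5t h_pos by (simp add: l_def)
  finally show ?thesis using q(1) by blast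
qed

theorem theta_le: "theta (f ` sphere 0 1) (f z0) t \<le> 30*h"
proof -
  have "u \<noteq> 0" using D_pos by (auto simp: D_def)
  hence "theta (f ` sphere 0 1) (f z0) t \<le> 30*h*t / t"
    using z0 t_pos image_sphere_near_hyperplane hyperplane_near_image_sphere
    by (intro theta_le_hyperplane) auto
  thus ?thesis using t_pos by simp
qed

end

section \<open>Vanishing Reifenberg flatness\<close>

lemma theta_image_sphere_le:
  fixes f :: "'a::euclidean_space \<Rightarrow> 'a"
  assumes hom: "homeomorphism UNIV UNIV f g" and z0: "norm z0 = 1"
    and rho: "0 < \<rho>" "\<rho> \<le> 1/2" and scale: "\<rho> * 2^k \<le> 2"
    and H: "H_bounded f (ball z0 (4*\<rho>)) e" and e: "0 < e" "e \<le> 1/10"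
    and small: "30 * (e + (1+e) * (2/3)^k) \<le> 1"
  shows "theta (f ` sphere 0 1) (f z0) (norm (f ((1+\<rho>) *\<^sub>R z0) - f z0) / 2)
           \<le> 60 * (e + (1+e) * (2/3)^k)"
proof -
  interpret sphere_scale f g z0 \<rho> e using assms by unfold_locales
  interpret sphere_flatness f g z0 \<rho> e "(1+e) * (2/3)^k"
    using small geometric_decay[OF scale] e by unfold_locales auto
  show ?thesis using theta_le by (simp add: h_def t_def a_def)
qed

text \<open>A single radius \<open>R\<close> works at every point of the sphere because
  \<open>z \<mapsto> \<bar>f ((1+\<rho>\<^sub>1) z) - f z\<bar>\<close> has a positive minimum on the compact sphere; the scale \<open>\<rho>\<close>
  itself then comes from the intermediate value theorem.\<close>
lemma uniform_scale_choice:
  fixes f :: "'a::euclidean_space \<Rightarrow> 'a"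
  assumes hom: "homeomorphism UNIV UNIV f g" and \<rho>1: "0 < \<rho>1"
  obtains R where "0 < R"
    and "\<And>z t. z \<in> sphere 0 1 \<Longrightarrow> 0 < t \<Longrightarrow> t \<le> R \<Longrightarrow>
           \<exists>\<rho>. 0 < \<rho> \<and> \<rho> \<le> \<rho>1 \<and> norm (f ((1+\<rho>) *\<^sub>R z) - f z) = 2*t"
proof -
  have cont: "isCont f z" for z
    using homeomorphism_cont1[OF hom] continuous_on_eq_continuous_at[of UNIV f] by simp
  define F where "F = (\<lambda>z::'a. norm (f ((1+\<rho>1) *\<^sub>R z) - f z))"
  have "continuous_on (sphere 0 1) F"
    unfolding F_def
    by (intro continuous_at_imp_continuous_on ballI continuous_intros isCont_o2[OF _ cont] cont)
  moreover have "sphere (0::'a) 1 \<noteq> {}" by (simp add: sphere_eq_empty)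
  ultimately obtain z1 where z1: "z1 \<in> sphere 0 1" "\<And>z. z \<in> sphere 0 1 \<Longrightarrow> F z1 \<le> F z"
    using continuous_attains_inf[OF compact_sphere] by blast
  have "(1+\<rho>1) *\<^sub>R z1 - z1 = \<rho>1 *\<^sub>R z1" by (simp add: algebra_simps)
  hence "(1+\<rho>1) *\<^sub>R z1 \<noteq> z1" using z1(1) \<rho>1 by auto
  hence "0 < F z1" using homeomorphism_UNIV_inj[OF hom] by (simp add: F_def inj_eq)
  hence "0 < F z1 / 2" by simp
  moreover have "\<exists>\<rho>. 0 < \<rho> \<and> \<rho> \<le> \<rho>1 \<and> norm (f ((1+\<rho>) *\<^sub>R z) - f z) = 2*t"
    if z: "z \<in> sphere 0 1" and t: "0 < t" "t \<le> F z1 / 2" for z t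
  proof -
    define \<psi> where "\<psi> = (\<lambda>s::real. norm (f ((1+s) *\<^sub>R z) - f z))"
    have "continuous_on {0..\<rho>1} \<psi>"
      unfolding \<psi>_def by (intro continuous_at_imp_continuous_on ballI continuous_intros isCont_o2[OF _ cont])
    moreover have "\<psi> 0 \<le> 2*t" "2*t \<le> \<psi> \<rho>1"
      using t z1(2)[OF z] by (simp_all add: \<psi>_def F_def)
    ultimately obtain \<rho> where \<rho>: "0 \<le> \<rho>" "\<rho> \<le> \<rho>1" "\<psi> \<rho> = 2*t"
      using IVT'[of \<psi> 0 "2*t" \<rho>1] \<rho>1 by auto
    moreover have "\<rho> \<noteq> 0" using \<rho>(3) t by (auto simp: \<psi>_def)
    ultimately show ?thesis by (intro exI[of _ \<rho>]) (auto simp: \<psi>_def)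
  qed
  ultimately show ?thesis using that by blast
qed

lemma reifenberg_flat_image_sphere:
  fixes f :: "'a::euclidean_space \<Rightarrow> 'a"
  assumes hom: "homeomorphism UNIV UNIV f g" and e: "0 < e" "e \<le> 1/10"
    and small: "30 * (e + (1+e) * (2/3)^k) \<le> 1"
    and r0: "0 < r0" "\<And>r z. 0 < r \<Longrightarrow> r < r0 \<Longrightarrow> z \<in> sphere 0 1 \<Longrightarrow> H_bounded f (ball z r) e"
  shows "\<exists>R>0. reifenberg_flat (60 * (e + (1+e) * (2/3)^k)) R (f ` sphere 0 1)"
proof -
  define \<rho>1 :: real where "\<rho>1 = min (r0/8) (min (1/2) (2/2^k))"
  have \<rho>1: "0 < \<rho>1" "\<rho>1 \<le> r0/8" "\<rho>1 \<le> 1/2" "\<rho>1 \<le> 2/2^k"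
    using r0 by (simp_all add: \<rho>1_def)
  obtain R where R: "0 < R" "\<And>z t. z \<in> sphere 0 1 \<Longrightarrow> 0 < t \<Longrightarrow> t \<le> R \<Longrightarrow>
      \<exists>\<rho>. 0 < \<rho> \<and> \<rho> \<le> \<rho>1 \<and> norm (f ((1+\<rho>) *\<^sub>R z) - f z) = 2*t"
    using uniform_scale_choice[OF hom \<rho>1(1)] by blast
  have "theta (f ` sphere 0 1) (f z) t \<le> 60 * (e + (1+e) * (2/3)^k)"
    if z: "z \<in> sphere 0 1" and t: "0 < t" "t \<le> R" for z t
  proof -
    obtain \<rho> where \<rho>: "0 < \<rho>" "\<rho> \<le> \<rho>1" "t = norm (f ((1+\<rho>) *\<^sub>R z) - f z) / 2"
      using R(2)[OF z t] by auto
    have "\<rho> \<le> 2/2^k" using \<rho> \<rho>1 by simp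
    hence "\<rho> * 2^k \<le> 2" by (simp add: field_simps)
    moreover have "H_bounded f (ball z (4*\<rho>)) e" using r0(2) z \<rho> \<rho>1 by simp
    ultimately have "theta (f ` sphere 0 1) (f z) (norm (f ((1+\<rho>) *\<^sub>R z) - f z) / 2)
        \<le> 60 * (e + (1+e) * (2/3)^k)"
      using z \<rho>(2) \<rho>1(3) by (intro theta_image_sphere_le[OF hom _ \<rho>(1) _ _ _ e small]) auto
    thus ?thesis by (simp only: \<rho>(3))
  qed
  moreover have "closed (f ` sphere 0 1)"
    using homeomorphism_cont1[OF hom]
    by (intro compact_imp_closed compact_continuous_image) (auto intro: continuous_on_subset)
  ultimately show ?thesis using R(1) unfolding reifenberg_flat_def by blast
qed

lemma reifenberg_flat_mono: "reifenberg_flat \<delta> R S \<Longrightarrow> \<delta> \<le> \<delta>' \<Longrightarrow> reifenberg_flat \<delta>' R S"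
  unfolding reifenberg_flat_def by (meson order_trans)

lemma small_flatness_parameters:
  fixes \<delta> :: real
  assumes "0 < \<delta>"
  obtains e k where "0 < e" "e \<le> 1/10" "30 * (e + (1+e) * (2/3)^k) \<le> 1"
    "60 * (e + (1+e) * (2/3::real)^k) \<le> \<delta>"
proof -
  define d where "d = min \<delta> 1 / 240"
  have d: "0 < d" "240 * d \<le> \<delta>" "240 * d \<le> 1" using assms by (auto simp: d_def)
  obtain k where k: "(2/3::real)^k < d" using real_arch_pow_inv[of d "2/3"] d by auto
  have "(1+d) * (2/3::real)^k \<le> 2 * (2/3)^k" using d by (intro mult_right_mono) auto
  hence "(1+d) * (2/3::real)^k \<le> 2 * d" using k by linarith
  thus ?thesis using that[of d k] d by simp
qed

theorem corollary2p7:
  fixes f :: "'a::euclidean_space \<Rightarrow> 'a"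
  assumes "DIM('a) \<ge> 2"
    and "quasiconformal f"
    and "((\<lambda>r. SUP z \<in> sphere (0::'a) 1. H_tilde f (ball z r)) \<longlongrightarrow> 0) (at_right 0)"
  shows "reifenberg_flat_vanishing (f ` sphere 0 1)"
proof -
  obtain g where hom: "homeomorphism UNIV UNIV f g" using assms(2) unfolding quasiconformal_def by blast
  have "\<exists>R>0. reifenberg_flat \<delta> R (f ` sphere 0 1)" if "0 < \<delta>" for \<delta>
  proof -
    obtain e k where e: "0 < e" "e \<le> 1/10" and small: "30 * (e + (1+e) * (2/3)^k) \<le> 1"
      and le_\<delta>: "60 * (e + (1+e) * (2/3::real)^k) \<le> \<delta>"
      using small_flatness_parameters[OF \<open>0 < \<delta>\<close>] by blast
    have "eventually (\<lambda>r. \<forall>z \<in> sphere 0 1. H_bounded f (ball z r) e) (at_right 0)"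
      using eventually_H_bounded_on_sphere[OF assms(3) homeomorphism_UNIV_inj[OF hom] e(1)] .
    then obtain r0 where "0 < r0" "\<And>r z. 0 < r \<Longrightarrow> r < r0 \<Longrightarrow> z \<in> sphere 0 1 \<Longrightarrow> H_bounded f (ball z r) e"
      unfolding eventually_at_right_field by auto
    then obtain R where "0 < R" "reifenberg_flat (60 * (e + (1+e) * (2/3)^k)) R (f ` sphere 0 1)"
      using reifenberg_flat_image_sphere[OF hom e small] by blast
    thus ?thesis using reifenberg_flat_mono le_\<delta> by blast
  qed
  moreover from this[of 1] have "closed (f ` sphere 0 1)" unfolding reifenberg_flat_def by auto
  ultimately show ?thesis unfolding reifenberg_flat_vanishing_def by blast
qed

end
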